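(* Under the hypotheses and notation of the previous statement (real-valued $w$, $\lim_{x\to\pm\infty}w=\mp k_0$, $k_0>0$, transfer matrix $M(k)$ defined through the Jost solutions of $-\psi''+(-w^2-iw'+k_0^2)\psi=k^2\psi$), assume moreover that $M_{11}$ and $M_{22}$ are differentiable at $k=k_0$. Then $$M_{11}(k_0)=2k_0\,\overline{M_{22}'(k_0)}.$$ Consequently the spectral singularity at $k_0$ (where $M_{22}(k_0)=0$ always) is self-dual, i.e. $M_{11}(k_0)=0$, if and only if $M_{22}'(k_0)=0$, i.e. iff $k_0$ is a zero of $M_{22}$ of order at least two.
   Context: The transfer matrix $M(k)$ relates left Jost solutions ($\phi_1^L\sim e^{ikx}$, $\phi_2^L\sim e^{-ikx}$ at $-\infty$) and right Jost solutions ($\phi_1^R\sim e^{ikx}$, $\phi_2^R\sim e^{-ikx}$ at $+\infty$) via $\phi_1^L=M_{11}\phi_1^R+M_{21}\phi_2^R$, $\phi_2^L=M_{12}\phi_1^R+M_{22}\phi_2^R$. Overline denotes complex conjugation, prime denotes derivative in $k$. *)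

theory Defs
  imports "HOL-Analysis.Analysis"
begin

definition pot :: "(real \<Rightarrow> real) \<Rightarrow> (real \<Rightarrow> real) \<Rightarrow> real \<Rightarrow> real \<Rightarrow> complex" where
  "pot w w' k0 x = - (complex_of_real (w x))\<^sup>2 - \<i> * complex_of_real (w' x) + (complex_of_real k0)\<^sup>2"

definition schrod_sol :: "(real \<Rightarrow> complex) \<Rightarrow> real \<Rightarrow> (real \<Rightarrow> complex) \<Rightarrow> bool" where
  "schrod_sol V k \<phi> \<longleftrightarrow>
     (\<exists>\<phi>' \<phi>''. \<forall>x. (\<phi> has_vector_derivative \<phi>' x) (at x) \<and>
                    (\<phi>' has_vector_derivative \<phi>'' x) (at x) \<and>
                    - \<phi>'' x + V x * \<phi> x = (complex_of_real k)\<^sup>2 * \<phi> x)"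

definition asymp_exp :: "(real \<Rightarrow> complex) \<Rightarrow> real \<Rightarrow> real filter \<Rightarrow> bool" where
  "asymp_exp \<phi> s F \<longleftrightarrow> ((\<lambda>x. \<phi> x - exp (\<i> * complex_of_real s * complex_of_real x)) \<longlongrightarrow> 0) F"

text \<open>M11, M12, M21, M22 are the entries of the transfer matrix of V (for real k > 0):
  phi1L = M11 phi1R + M21 phi2R and phi2L = M12 phi1R + M22 phi2R, where
  phi1L ~ e^{ikx}, phi2L ~ e^{-ikx} at -infinity and phi1R ~ e^{ikx}, phi2R ~ e^{-ikx} at +infinity
  are the Jost solutions.\<close>
definition is_transfer_matrix ::
  "(real \<Rightarrow> complex) \<Rightarrow> (real \<Rightarrow> complex) \<Rightarrow> (real \<Rightarrow> complex) \<Rightarrow> (real \<Rightarrow> complex)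
     \<Rightarrow> (real \<Rightarrow> complex) \<Rightarrow> bool" where
  "is_transfer_matrix V M11 M12 M21 M22 \<longleftrightarrow>
     (\<forall>k>0. \<exists>\<phi>1L \<phi>2L \<phi>1R \<phi>2R.
        schrod_sol V k \<phi>1L \<and> schrod_sol V k \<phi>2L \<and> schrod_sol V k \<phi>1R \<and> schrod_sol V k \<phi>2R \<and>
        asymp_exp \<phi>1L k at_bot \<and> asymp_exp \<phi>2L (- k) at_bot \<and>
        asymp_exp \<phi>1R k at_top \<and> asymp_exp \<phi>2R (- k) at_top \<and>
        (\<forall>x. \<phi>1L x = M11 k * \<phi>1R x + M21 k * \<phi>2R x) \<and>
        (\<forall>x. \<phi>2L x = M12 k * \<phi>1R x + M22 k * \<phi>2R x))"

end

theory Submission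
  imports Defs
begin

text \<open>Write \<open>A = d/dx + i w\<close>. Since \<open>V = -w\<^sup>2 - i w' + k0\<^sup>2\<close>, one checks that for every solution
  \<open>\<psi>\<close> of \<open>-\<psi>'' + V \<psi> = k\<^sup>2 \<psi>\<close> the function \<open>\<chi> = cnj (A \<psi>)\<close> solves the same equation: the conjugate
  potential is the supersymmetric partner of \<open>V\<close>, and complex conjugation undoes the exchange.
  Because \<open>V\<close> is integrable, the derivatives of the Jost solutions behave like those of the plane
  waves, and a solution tending to \<open>0\<close> at \<open>+\<infinity>\<close> or at \<open>-\<infinity>\<close> vanishes identically.  Comparing
  asymptotics, \<open>\<chi>\<close> maps \<open>\<phi>\<^sub>1\<^sup>L\<close> to \<open>-i(k+k0) \<phi>\<^sub>2\<^sup>L\<close>, \<open>\<phi>\<^sub>1\<^sup>R\<close> to \<open>-i(k-k0) \<phi>\<^sub>2\<^sup>R\<close> and \<open>\<phi>\<^sub>2\<^sup>R\<close> to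
  \<open>i(k+k0) \<phi>\<^sub>1\<^sup>R\<close>.  Applying it to \<open>\<phi>\<^sub>1\<^sup>L = M\<^sub>1\<^sub>1 \<phi>\<^sub>1\<^sup>R + M\<^sub>2\<^sub>1 \<phi>\<^sub>2\<^sup>R\<close> and comparing with
  \<open>\<phi>\<^sub>2\<^sup>L = M\<^sub>1\<^sub>2 \<phi>\<^sub>1\<^sup>R + M\<^sub>2\<^sub>2 \<phi>\<^sub>2\<^sup>R\<close> yields \<open>(k - k0) M\<^sub>1\<^sub>1(k) = (k + k0) cnj (M\<^sub>2\<^sub>2(k))\<close> for all
  \<open>k > 0\<close>.  At \<open>k = k0\<close> this forces \<open>M\<^sub>2\<^sub>2(k0) = 0\<close>, and differentiating at \<open>k0\<close> gives
  \<open>M\<^sub>1\<^sub>1(k0) = 2 k0 cnj (M\<^sub>2\<^sub>2'(k0))\<close>.\<close>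

section \<open>Solutions as first order systems\<close>

definition schrod_pair ::
  "(real \<Rightarrow> complex) \<Rightarrow> real \<Rightarrow> (real \<Rightarrow> complex) \<Rightarrow> (real \<Rightarrow> complex) \<Rightarrow> bool" where
  "schrod_pair V k \<psi> \<psi>' \<longleftrightarrow> (\<forall>x. (\<psi> has_vector_derivative \<psi>' x) (at x)) \<and>
     (\<forall>x. (\<psi>' has_vector_derivative ((V x - (of_real k)\<^sup>2) * \<psi> x)) (at x))"

lemma schrod_sol_imp_schrod_pair:
  assumes "schrod_sol V k \<phi>"
  obtains \<phi>' where "schrod_pair V k \<phi> \<phi>'"
proof -
  obtain \<phi>' \<phi>'' where h: "\<forall>x. (\<phi> has_vector_derivative \<phi>' x) (at x) \<and>
      (\<phi>' has_vector_derivative \<phi>'' x) (at x) \<and> - \<phi>'' x + V x * \<phi> x = (of_real k)\<^sup>2 * \<phi> x"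
    using assms unfolding schrod_sol_def by blast
  have "\<phi>'' x = (V x - (of_real k)\<^sup>2) * \<phi> x" for x
    using h[rule_format, of x] by (simp add: algebra_simps)
  with h show thesis by (intro that[of \<phi>']) (auto simp: schrod_pair_def)
qed

lemma schrod_pair_derivative_unique:
  "schrod_pair V k \<psi> \<psi>' \<Longrightarrow> schrod_pair V k \<psi> \<chi>' \<Longrightarrow> \<psi>' x = \<chi>' x"
  unfolding schrod_pair_def using vector_derivative_unique_at by blast

lemma schrod_pair_lincomb:
  assumes "schrod_pair V k f f'" "schrod_pair V k g g'"
  shows "schrod_pair V k (\<lambda>x. a * f x + b * g x) (\<lambda>x. a * f' x + b * g' x)"
proof -
  have "((\<lambda>x. a * f' x + b * g' x) has_vector_derivative
      a * ((V x - (of_real k)\<^sup>2) * f x) + b * ((V x - (of_real k)\<^sup>2) * g x)) (at x)" for x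
    using assms by (auto simp: schrod_pair_def intro!: derivative_intros)
  then show ?thesis
    using assms by (auto simp: schrod_pair_def algebra_simps intro!: derivative_intros)
qed

lemma schrod_pair_reflect:
  assumes "schrod_pair V k \<psi> \<psi>'"
  shows "schrod_pair (\<lambda>x. V (-x)) k (\<lambda>x. \<psi> (-x)) (\<lambda>x. - \<psi>' (-x))"
proof -
  have m: "(uminus has_vector_derivative (-1)) (at x)" for x :: real
    using has_vector_derivative_minus[OF has_vector_derivative_id[of "at x"]] by simp
  have "((\<psi> \<circ> uminus) has_vector_derivative ((-1) *\<^sub>R \<psi>' (-x))) (at x)" for x
    by (rule vector_diff_chain_at[OF m]) (use assms in \<open>auto simp: schrod_pair_def\<close>)
  moreover have "((\<psi>' \<circ> uminus) has_vector_derivative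
      ((-1) *\<^sub>R ((V (-x) - (of_real k)\<^sup>2) * \<psi> (-x)))) (at x)" for x
    by (rule vector_diff_chain_at[OF m]) (use assms in \<open>auto simp: schrod_pair_def\<close>)
  then have "((\<lambda>x. - \<psi>' (-x)) has_vector_derivative ((V (-x) - (of_real k)\<^sup>2) * \<psi> (-x))) (at x)" for x
    using has_vector_derivative_minus[of "\<psi>' \<circ> uminus" _ "at x"] by (force simp: o_def)
  ultimately show ?thesis unfolding schrod_pair_def by (simp add: o_def)
qed

section \<open>Short range potentials\<close>

definition short_range :: "(real \<Rightarrow> complex) \<Rightarrow> bool" where
  "short_range V \<longleftrightarrow> (\<forall>a b. (\<lambda>x. norm (V x)) integrable_on {a..b}) \<and>
     (\<forall>e>0. \<exists>B. \<forall>a b. b \<le> -B \<or> B \<le> a \<longrightarrow> integral {a..b} (\<lambda>x. norm (V x)) \<le> e)"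

lemma short_range_integrable: "short_range V \<Longrightarrow> (\<lambda>x. norm (V x)) integrable_on {a..b}"
  by (simp add: short_range_def)

lemma short_range_tail:
  assumes "short_range V" "e > 0"
  obtains B where "\<And>a b. b \<le> -B \<or> B \<le> a \<Longrightarrow> integral {a..b} (\<lambda>x. norm (V x)) \<le> e"
  using assms unfolding short_range_def by metis

lemma integrable_nonneg_tail_small:
  fixes f :: "real \<Rightarrow> real"
  assumes f: "f integrable_on UNIV" and nonneg: "\<And>x. 0 \<le> f x" and e: "e > 0"
  obtains B where "\<And>a b. b \<le> -B \<or> B \<le> a \<Longrightarrow> integral {a..b} f \<le> e"
proof -
  define T where "T = integral UNIV f"
  have f_Icc: "f integrable_on {a..b}" for a b
    by (rule integrable_on_subinterval[OF f]) auto
  have le_T: "integral {a..b} f \<le> T" for a b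
    unfolding T_def by (rule integral_subset_le) (use f_Icc f nonneg in auto)
  have unbounded: "\<not> (\<exists>a b. (UNIV::real set) = cbox a b)"
    by (metis bounded_cbox not_bounded_UNIV)
  obtain B where "B > 0" and B: "\<And>a b. ball 0 B \<subseteq> cbox a b \<Longrightarrow>
      \<exists>z. ((\<lambda>x. if x \<in> UNIV then f x else 0) has_integral z) (cbox a b) \<and> norm (z - T) < e"
    using has_integral_altD[OF integrable_integral[OF f, folded T_def] unbounded e] by blast
  have "ball 0 B \<subseteq> cbox (-B) B" by (auto simp: dist_real_def)
  then have core: "T - e < integral {-B..B} f"
    using B[of "-B" B] by (auto simp: integral_unique)
  show thesis
  proof (rule that)
    fix a b assume "b \<le> -B \<or> B \<le> a"
    then consider "b < a" | "a \<le> b" "b \<le> -B" | "a \<le> b" "B \<le> a" by linarith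
    then show "integral {a..b} f \<le> e"
    proof cases
      case 1
      then show ?thesis using e by simp
    next
      case 2
      have "integral {a..b} f + integral {b..B} f = integral {a..B} f"
        by (rule Henstock_Kurzweil_Integration.integral_combine) (use 2 \<open>B > 0\<close> f_Icc in auto)
      moreover have "integral {-B..B} f \<le> integral {b..B} f"
        by (rule integral_subset_le) (use 2 f_Icc nonneg in auto)
      ultimately show ?thesis using core le_T[of a B] by linarith
    next
      case 3
      have "integral {-B..a} f + integral {a..b} f = integral {-B..b} f"
        by (rule Henstock_Kurzweil_Integration.integral_combine) (use 3 \<open>B > 0\<close> f_Icc in auto)
      moreover have "integral {-B..B} f \<le> integral {-B..a} f"
        by (rule integral_subset_le) (use 3 f_Icc nonneg in auto)
      ultimately show ?thesis using core le_T[of "-B" b] by linarith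
    qed
  qed
qed

lemma absolutely_integrable_short_range:
  assumes "V absolutely_integrable_on UNIV"
  shows "short_range V"
proof -
  have norm_V: "(\<lambda>x. norm (V x)) integrable_on UNIV"
    using assms unfolding absolutely_integrable_on_def by auto
  then have "(\<lambda>x. norm (V x)) integrable_on {a..b}" for a b
    by (rule integrable_on_subinterval) auto
  with integrable_nonneg_tail_small[OF norm_V] show ?thesis
    unfolding short_range_def by (metis norm_ge_zero)
qed

lemma short_range_reflect:
  assumes "short_range V"
  shows "short_range (\<lambda>x. V (-x))"
proof -
  have reflect: "integral {a..b} (\<lambda>x. norm (V (-x))) = integral {-b..-a} (\<lambda>x. norm (V x))" for a b
    using Henstock_Kurzweil_Integration.integral_reflect_real[where f="\<lambda>x. norm (V x)" and a="-b" and b="-a"]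
    by simp
  have "(\<lambda>x. norm (V (-x))) integrable_on {a..b}" for a b
    using Henstock_Kurzweil_Integration.integrable_reflect_real[where f="\<lambda>x. norm (V x)" and a="-b" and b="-a"]
      short_range_integrable[OF assms] by simp
  moreover have "\<exists>B. \<forall>a b. b \<le> -B \<or> B \<le> a \<longrightarrow> integral {a..b} (\<lambda>x. norm (V (-x))) \<le> e"
    if e: "e > 0" for e
  proof -
    obtain B where "\<And>a b. b \<le> -B \<or> B \<le> a \<Longrightarrow> integral {a..b} (\<lambda>x. norm (V x)) \<le> e"
      using short_range_tail[OF assms e] by blast
    then show ?thesis unfolding reflect by (intro exI[of _ B]) auto
  qed
  ultimately show ?thesis unfolding short_range_def by blast
qed

lemma short_range_eventually_unit_integral_le:
  fixes F :: "real filter"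
  assumes V: "short_range V" and F: "F = at_top \<or> F = at_bot" and e: "e > 0"
  shows "eventually (\<lambda>x. integral {x..x+1} (\<lambda>t. norm (V t)) \<le> e) F"
proof -
  obtain B where B: "\<And>a b. b \<le> -B \<or> B \<le> a \<Longrightarrow> integral {a..b} (\<lambda>x. norm (V x)) \<le> e"
    using short_range_tail[OF V e] by blast
  show ?thesis
    using F
  proof
    assume "F = at_top"
    then show ?thesis by (auto simp: eventually_at_top_linorder intro: B)
  next
    assume "F = at_bot"
    then show ?thesis by (auto simp: eventually_at_bot_linorder intro!: exI[of _ "-B-1"] B)
  qed
qed

lemma eventually_forall_unit_interval:
  fixes F :: "real filter"
  assumes F: "F = at_top \<or> F = at_bot" and P: "eventually P F"
  shows "eventually (\<lambda>x. \<forall>t\<in>{x..x+1}. P t) F"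
  using F
proof
  assume "F = at_top"
  with P obtain N where "\<forall>t\<ge>N. P t" by (auto simp: eventually_at_top_linorder)
  with \<open>F = at_top\<close> show ?thesis by (auto simp: eventually_at_top_linorder intro!: exI[of _ N])
next
  assume "F = at_bot"
  with P obtain N where "\<forall>t\<le>N. P t" by (auto simp: eventually_at_bot_linorder)
  with \<open>F = at_bot\<close> show ?thesis
    by (auto simp: eventually_at_bot_linorder intro!: exI[of _ "N - 1"])
qed

section \<open>Decay of derivatives\<close>

lemma norm_vector_derivative_le_unit_interval:
  fixes u u' u'' :: "real \<Rightarrow> complex" and g :: "real \<Rightarrow> real"
  assumes u': "\<And>t. (u has_vector_derivative u' t) (at t)"
    and u'': "\<And>t. (u' has_vector_derivative u'' t) (at t)"
    and g: "\<And>t. t \<in> {x..x+1} \<Longrightarrow> norm (u'' t) \<le> g t" and g_int: "g integrable_on {x..x+1}"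
  shows "norm (u' x) \<le> norm (u (x+1)) + norm (u x) + integral {x..x+1} g"
proof -
  define G where "G = integral {x..x+1} g"
  have g_nonneg: "0 \<le> g t" if "t \<in> {x..x+1}" for t using g[OF that] norm_ge_zero order_trans by blast
  have osc: "norm (u' t - u' x) \<le> G" if t: "t \<in> {x..x+1}" for t
  proof -
    have "(u'' has_integral (u' t - u' x)) {x..t}"
      by (rule fundamental_theorem_of_calculus) (use t u'' in \<open>auto intro: has_vector_derivative_at_within\<close>)
    then have "u'' integrable_on {x..t}" and int_u'': "integral {x..t} u'' = u' t - u' x"
      by (auto simp: integral_unique)
    moreover have "g integrable_on {x..t}" by (rule integrable_on_subinterval[OF g_int]) (use t in auto)
    ultimately have "norm (integral {x..t} u'') \<le> integral {x..t} g"
      by (intro integral_norm_bound_integral) (use g t in auto)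
    also have "\<dots> \<le> G" unfolding G_def
      by (rule integral_subset_le) (use t g_int \<open>g integrable_on {x..t}\<close> g_nonneg in auto)
    finally show ?thesis using int_u'' by simp
  qed
  have "((\<lambda>t. u' t - u' x) has_integral
         ((u (x+1) - of_real (x+1) * u' x) - (u x - of_real x * u' x))) {x..x+1}"
  proof (rule fundamental_theorem_of_calculus)
    fix t assume "t \<in> {x..x+1}"
    have "((\<lambda>t. u t - of_real t * u' x) has_vector_derivative (u' t - 1 * u' x)) (at t)"
      by (intro derivative_intros u') (auto intro: derivative_eq_intros)
    then show "((\<lambda>t. u t - of_real t * u' x) has_vector_derivative (u' t - u' x)) (at t within {x..x+1})"
      by (auto intro: has_vector_derivative_at_within)
  qed simp
  then have "((\<lambda>t. u' t - u' x) has_integral (u (x+1) - u x - u' x)) (cbox x (x+1))"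
    by (simp add: algebra_simps)
  then have "norm (u (x+1) - u x - u' x) \<le> G * measure lborel (cbox x (x+1))"
    by (rule has_integral_bound[rotated]) (use osc[of x] osc in auto)
  then have "norm (u (x+1) - u x - u' x) \<le> G" by simp
  moreover have "norm (u' x) \<le> norm (u (x+1)) + norm (u x) + norm (u (x+1) - u x - u' x)"
    using norm_triangle_ineq4[of "u (x+1)" "u x"] norm_triangle_ineq4[of "u (x+1) - u x" "u (x+1) - u x - u' x"]
    by simp
  ultimately show ?thesis unfolding G_def by linarith
qed

lemma norm_derivative_le_of_equation:
  fixes u u' u'' p V :: "real \<Rightarrow> complex" and k P \<delta> e x :: real
  assumes V: "short_range V"
    and u': "\<And>t. (u has_vector_derivative u' t) (at t)"
    and u'': "\<And>t. (u' has_vector_derivative u'' t) (at t)"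
    and eq: "\<And>t. u'' t = V t * p t - (of_real k)\<^sup>2 * u t"
    and p: "\<And>t. t \<in> {x..x+1} \<Longrightarrow> norm (p t) \<le> P"
    and u: "\<And>t. t \<in> {x..x+1} \<Longrightarrow> norm (u t) \<le> \<delta>"
    and V_int: "integral {x..x+1} (\<lambda>t. norm (V t)) \<le> e" and "0 \<le> P"
  shows "norm (u' x) \<le> (2 + k\<^sup>2) * \<delta> + P * e"
proof -
  define g where "g = (\<lambda>t. P * norm (V t) + k\<^sup>2 * \<delta>)"
  have g_int: "g integrable_on {x..x+1}"
    unfolding g_def by (intro integrable_add integrable_on_mult_right short_range_integrable[OF V]
        integrable_const_ivl)
  have "norm (u'' t) \<le> g t" if t: "t \<in> {x..x+1}" for t
  proof -
    have "norm (u'' t) \<le> norm (V t) * norm (p t) + k\<^sup>2 * norm (u t)"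
      using eq norm_triangle_ineq4[of "V t * p t" "(of_real k)\<^sup>2 * u t"] by (simp add: norm_mult norm_power)
    also have "\<dots> \<le> norm (V t) * P + k\<^sup>2 * \<delta>"
      using p u t by (intro add_mono mult_left_mono) auto
    finally show ?thesis by (simp add: g_def mult.commute)
  qed
  then have "norm (u' x) \<le> norm (u (x+1)) + norm (u x) + integral {x..x+1} g"
    by (rule norm_vector_derivative_le_unit_interval[OF u' u'' _ g_int])
  moreover have "integral {x..x+1} g = P * integral {x..x+1} (\<lambda>t. norm (V t)) + k\<^sup>2 * \<delta>"
    unfolding g_def by (subst integral_add)
      (auto intro: integrable_on_mult_right short_range_integrable[OF V] simp: integral_mult_right)
  moreover have "P * integral {x..x+1} (\<lambda>t. norm (V t)) \<le> P * e"
    using V_int \<open>0 \<le> P\<close> by (rule mult_left_mono)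
  moreover have "norm (u (x+1)) \<le> \<delta>" "norm (u x) \<le> \<delta>" using u by auto
  ultimately show ?thesis by (simp add: algebra_simps)
qed

lemma tendsto_zero_derivative_of_equation:
  fixes u u' u'' p V :: "real \<Rightarrow> complex" and k P :: real and F :: "real filter"
  assumes V: "short_range V" and F: "F = at_top \<or> F = at_bot"
    and u': "\<And>t. (u has_vector_derivative u' t) (at t)"
    and u'': "\<And>t. (u' has_vector_derivative u'' t) (at t)"
    and eq: "\<And>t. u'' t = V t * p t - (of_real k)\<^sup>2 * u t"
    and p: "eventually (\<lambda>t. norm (p t) \<le> P) F"
    and u: "(u \<longlongrightarrow> 0) F"
  shows "(u' \<longlongrightarrow> 0) F"
proof (rule tendstoI)
  fix \<epsilon> :: real assume "\<epsilon> > 0"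
  have "F \<noteq> bot" using F by (metis trivial_limit_at_top_linorder trivial_limit_at_bot_linorder)
  with p obtain t where "norm (p t) \<le> P" using eventually_happens by blast
  then have "0 \<le> P" using norm_ge_zero order_trans by blast
  define \<delta> where "\<delta> = \<epsilon> / (2 * (2 + k\<^sup>2))"
  define e where "e = \<epsilon> / (2 * (P + 1))"
  have "0 < 2 + k\<^sup>2" by (simp add: add_pos_nonneg)
  then have "(2 + k\<^sup>2) * \<delta> = \<epsilon> / 2"
    unfolding \<delta>_def by (simp add: field_simps)
  moreover have "P * e < \<epsilon> / 2"
    unfolding e_def using \<open>0 \<le> P\<close> \<open>\<epsilon> > 0\<close> by (simp add: field_simps)
  ultimately have small: "(2 + k\<^sup>2) * \<delta> + P * e < \<epsilon>" by linarith
  have "\<delta> > 0" "e > 0" using \<open>\<epsilon> > 0\<close> \<open>0 \<le> P\<close> by (simp_all add: \<delta>_def e_def add_pos_nonneg)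
  then have "eventually (\<lambda>x. (\<forall>t\<in>{x..x+1}. norm (u t) \<le> \<delta> \<and> norm (p t) \<le> P) \<and>
      integral {x..x+1} (\<lambda>t. norm (V t)) \<le> e) F"
    using tendstoD[OF u \<open>\<delta> > 0\<close>] p
    by (intro eventually_conj eventually_forall_unit_interval[OF F]
        short_range_eventually_unit_integral_le[OF V F]) (auto elim: eventually_mono)
  then show "eventually (\<lambda>x. dist (u' x) 0 < \<epsilon>) F"
  proof (rule eventually_mono)
    fix x assume "(\<forall>t\<in>{x..x+1}. norm (u t) \<le> \<delta> \<and> norm (p t) \<le> P) \<and>
      integral {x..x+1} (\<lambda>t. norm (V t)) \<le> e"
    then have "norm (u' x) \<le> (2 + k\<^sup>2) * \<delta> + P * e"
      by (intro norm_derivative_le_of_equation[OF V u' u'' eq _ _ _ \<open>0 \<le> P\<close>]) auto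
    with small show "dist (u' x) 0 < \<epsilon>" by simp
  qed
qed

section \<open>Solutions vanishing at infinity\<close>

definition energy :: "real \<Rightarrow> (real \<Rightarrow> complex) \<Rightarrow> (real \<Rightarrow> complex) \<Rightarrow> real \<Rightarrow> real" where
  "energy k \<psi> \<psi>' t = k\<^sup>2 * (norm (\<psi> t))\<^sup>2 + (norm (\<psi>' t))\<^sup>2"

lemma energy_nonneg: "0 \<le> energy k \<psi> \<psi>' t"
  by (simp add: energy_def)

lemma energy_eq_0_imp: "k > 0 \<Longrightarrow> energy k \<psi> \<psi>' t = 0 \<Longrightarrow> \<psi> t = 0"
  unfolding energy_def by (simp add: add_nonneg_eq_0_iff)

lemma energy_has_vector_derivative:
  assumes "schrod_pair V k \<psi> \<psi>'"
  shows "((\<lambda>t. of_real (energy k \<psi> \<psi>' t) :: complex) has_vector_derivative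
          (\<psi>' t * cnj (V t) * cnj (\<psi> t) + V t * \<psi> t * cnj (\<psi>' t))) (at t)"
proof -
  have E: "(\<lambda>t. of_real (energy k \<psi> \<psi>' t) :: complex) =
      (\<lambda>t. of_real (k\<^sup>2) * (\<psi> t * cnj (\<psi> t)) + \<psi>' t * cnj (\<psi>' t))"
    by (rule ext) (simp add: energy_def complex_norm_square[symmetric])
  have "((\<lambda>t. of_real (k\<^sup>2) * (\<psi> t * cnj (\<psi> t)) + \<psi>' t * cnj (\<psi>' t)) has_vector_derivative
      (of_real (k\<^sup>2) * (\<psi> t * cnj (\<psi>' t) + \<psi>' t * cnj (\<psi> t)) +
      (\<psi>' t * cnj ((V t - (of_real k)\<^sup>2) * \<psi> t) + (V t - (of_real k)\<^sup>2) * \<psi> t * cnj (\<psi>' t)))) (at t)"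
    using assms unfolding schrod_pair_def by (intro derivative_intros) auto
  then show ?thesis unfolding E by (simp add: algebra_simps)
qed

lemma norm_energy_derivative_le:
  assumes "k > 0"
  shows "norm (\<psi>' t * cnj (V t) * cnj (\<psi> t) + V t * \<psi> t * cnj (\<psi>' t))
    \<le> norm (V t) * energy k \<psi> \<psi>' t / k"
proof -
  have "norm (\<psi>' t * cnj (V t) * cnj (\<psi> t) + V t * \<psi> t * cnj (\<psi>' t))
      \<le> norm (\<psi>' t * cnj (V t) * cnj (\<psi> t)) + norm (V t * \<psi> t * cnj (\<psi>' t))"
    by (rule norm_triangle_ineq)
  also have "\<dots> = norm (V t) * (2 * norm (\<psi> t) * norm (\<psi>' t))"
    by (simp add: norm_mult algebra_simps)
  also have "\<dots> \<le> norm (V t) * (energy k \<psi> \<psi>' t / k)"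
  proof (rule mult_left_mono)
    have "0 \<le> (k * norm (\<psi> t) - norm (\<psi>' t))\<^sup>2" by simp
    then have "2 * k * norm (\<psi> t) * norm (\<psi>' t) \<le> energy k \<psi> \<psi>' t"
      unfolding energy_def by (simp add: power2_eq_square algebra_simps)
    then show "2 * norm (\<psi> t) * norm (\<psi>' t) \<le> energy k \<psi> \<psi>' t / k"
      using assms by (simp add: field_simps)
  qed simp
  finally show ?thesis by simp
qed

lemma continuous_on_energy:
  assumes "schrod_pair V k \<psi> \<psi>'"
  shows "continuous_on A (energy k \<psi> \<psi>')"
proof -
  have "continuous_on A (\<lambda>t. of_real (energy k \<psi> \<psi>' t) :: complex)"
    by (intro continuous_at_imp_continuous_on ballI)
      (rule has_vector_derivative_continuous[OF energy_has_vector_derivative[OF assms]])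
  then have "continuous_on A (\<lambda>t. norm (of_real (energy k \<psi> \<psi>' t) :: complex))"
    by (rule continuous_on_norm)
  then show ?thesis by (simp add: energy_nonneg)
qed

lemma energy_le_increment:
  assumes V: "short_range V" and k: "k > 0" and \<psi>: "schrod_pair V k \<psi> \<psi>'" and "y \<le> x"
    and M: "\<And>t. t \<in> {y..x} \<Longrightarrow> energy k \<psi> \<psi>' t \<le> M"
  shows "energy k \<psi> \<psi>' x \<le> energy k \<psi> \<psi>' y + M / k * integral {y..x} (\<lambda>t. norm (V t))"
proof -
  let ?E = "\<lambda>t. of_real (energy k \<psi> \<psi>' t) :: complex"
  let ?E' = "\<lambda>t. \<psi>' t * cnj (V t) * cnj (\<psi> t) + V t * \<psi> t * cnj (\<psi>' t)"
  have FTC: "(?E' has_integral (?E x - ?E y)) {y..x}"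
    by (rule fundamental_theorem_of_calculus[OF \<open>y \<le> x\<close>])
      (auto intro: has_vector_derivative_at_within energy_has_vector_derivative[OF \<psi>])
  have "norm (integral {y..x} ?E') \<le> integral {y..x} (\<lambda>t. M / k * norm (V t))"
  proof (rule integral_norm_bound_integral)
    show "?E' integrable_on {y..x}" using FTC by auto
    show "(\<lambda>t. M / k * norm (V t)) integrable_on {y..x}"
      by (intro integrable_on_mult_right short_range_integrable[OF V])
    fix t assume t: "t \<in> {y..x}"
    have "norm (?E' t) \<le> norm (V t) * energy k \<psi> \<psi>' t / k" by (rule norm_energy_derivative_le[OF k])
    also have "\<dots> \<le> norm (V t) * M / k"
      using M[OF t] k by (intro divide_right_mono mult_left_mono) auto
    finally show "norm (?E' t) \<le> M / k * norm (V t)" by (simp add: ac_simps)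
  qed
  then have "norm (?E x - ?E y) \<le> M / k * integral {y..x} (\<lambda>t. norm (V t))"
    using FTC by (simp add: integral_unique)
  moreover have "norm (?E x - ?E y) = \<bar>energy k \<psi> \<psi>' x - energy k \<psi> \<psi>' y\<bar>"
    by (metis norm_of_real of_real_diff)
  ultimately show ?thesis by linarith
qed

lemma nonneg_le_half_Sup_imp_zero:
  fixes f :: "'a \<Rightarrow> real"
  assumes "A \<noteq> {}" and "bdd_above (f ` A)" and "\<And>t. t \<in> A \<Longrightarrow> 0 \<le> f t"
    and "\<And>t. t \<in> A \<Longrightarrow> f t \<le> Sup (f ` A) / 2" and "t \<in> A"
  shows "f t = 0"
proof -
  have "Sup (f ` A) \<le> Sup (f ` A) / 2" using assms by (intro cSUP_least) auto
  moreover have "f t \<le> Sup (f ` A)" using assms by (intro cSUP_upper) auto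
  ultimately show ?thesis using assms by force
qed

text \<open>The energy obeys \<open>|E'| \<le> |V| E / k\<close>.  On an interval \<open>A\<close> carrying at most \<open>k/2\<close> of the mass of
  \<open>|V|\<close>, on which \<open>E\<close> comes arbitrarily close to \<open>0\<close> from the left, this bounds \<open>E\<close> by half its
  supremum.\<close>

lemma energy_zero_on_interval:
  assumes V: "short_range V" and k: "k > 0" and \<psi>: "schrod_pair V k \<psi> \<psi>'"
    and A_ivl: "\<And>y x. y \<in> A \<Longrightarrow> x \<in> A \<Longrightarrow> {y..x} \<subseteq> A"
    and A_mass: "\<And>y x. y \<in> A \<Longrightarrow> x \<in> A \<Longrightarrow> integral {y..x} (\<lambda>t. norm (V t)) \<le> k / 2"
    and bdd: "bdd_above (energy k \<psi> \<psi>' ` A)"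
    and approx: "\<And>x \<epsilon>. x \<in> A \<Longrightarrow> \<epsilon> > 0 \<Longrightarrow> \<exists>y\<in>A. y \<le> x \<and> energy k \<psi> \<psi>' y < \<epsilon>"
    and "t \<in> A"
  shows "energy k \<psi> \<psi>' t = 0"
proof -
  let ?E = "energy k \<psi> \<psi>'"
  let ?S = "Sup (?E ` A)"
  have ub: "?E s \<le> ?S" if "s \<in> A" for s using bdd that by (intro cSUP_upper) auto
  have "0 \<le> ?S" using ub[OF \<open>t \<in> A\<close>] energy_nonneg[of k \<psi> \<psi>' t] by linarith
  have "?E x \<le> ?S / 2" if x: "x \<in> A" for x
  proof (rule field_le_epsilon)
    fix \<epsilon> :: real assume "\<epsilon> > 0"
    with approx[OF x] obtain y where y: "y \<in> A" "y \<le> x" "?E y < \<epsilon>" by blast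
    have "?E x \<le> ?E y + ?S / k * integral {y..x} (\<lambda>t. norm (V t))"
      using A_ivl[OF y(1) x] by (intro energy_le_increment[OF V k \<psi> y(2)] ub) auto
    also have "\<dots> \<le> ?E y + ?S / k * (k / 2)"
      using A_mass[OF y(1) x] \<open>0 \<le> ?S\<close> k by (intro add_left_mono mult_left_mono) auto
    finally show "?E x \<le> ?S / 2 + \<epsilon>" using y(3) k by simp
  qed
  then show ?thesis
    using \<open>t \<in> A\<close> bdd by (intro nonneg_le_half_Sup_imp_zero[of A ?E]) (auto simp: energy_nonneg)
qed

lemma bdd_above_image_atMost_of_tendsto_at_bot:
  fixes f :: "real \<Rightarrow> real"
  assumes "continuous_on UNIV f" and "(f \<longlongrightarrow> l) at_bot"
  shows "bdd_above (f ` {..a})"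
proof -
  have "eventually (\<lambda>t. f t \<le> l + 1) at_bot"
    using tendstoD[OF assms(2), of 1] by (auto elim!: eventually_mono simp: dist_real_def)
  then obtain N where N: "\<And>t. t \<le> N \<Longrightarrow> f t \<le> l + 1"
    by (auto simp: eventually_at_bot_linorder)
  have "bdd_above (f ` {min N a..a})"
    using assms(1) by (intro bounded_imp_bdd_above compact_imp_bounded compact_continuous_image)
      (auto intro: continuous_on_subset)
  then obtain M where M: "\<forall>t\<in>{min N a..a}. f t \<le> M" by (auto simp: bdd_above_def)
  have "f t \<le> max (l + 1) M" if "t \<le> a" for t
  proof (cases "t \<le> N")
    case True
    then show ?thesis using N by (simp add: le_max_iff_disj)
  next
    case False
    then show ?thesis using M that by (simp add: le_max_iff_disj)
  qed
  then show ?thesis by (metis atMost_iff bdd_aboveI2)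
qed

lemma energy_zero_near_at_bot:
  assumes V: "short_range V" and k: "k > 0" and \<psi>: "schrod_pair V k \<psi> \<psi>'"
    and lim: "(\<psi> \<longlongrightarrow> 0) at_bot"
  obtains x0 where "\<And>t. t \<le> x0 \<Longrightarrow> energy k \<psi> \<psi>' t = 0"
proof -
  let ?E = "energy k \<psi> \<psi>'"
  have "(\<psi>' \<longlongrightarrow> 0) at_bot"
  proof (rule tendsto_zero_derivative_of_equation[OF V _ _ _ _ _ lim])
    show "eventually (\<lambda>t. norm (\<psi> t) \<le> 1) at_bot"
      using tendstoD[OF lim, of 1] by (auto elim: eventually_mono)
  qed (use \<psi> in \<open>auto simp: schrod_pair_def algebra_simps\<close>)
  then have "((\<lambda>t. k\<^sup>2 * (norm (\<psi> t))\<^sup>2 + (norm (\<psi>' t))\<^sup>2)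
      \<longlongrightarrow> k\<^sup>2 * (norm (0::complex))\<^sup>2 + (norm (0::complex))\<^sup>2) at_bot"
    by (intro tendsto_intros lim)
  then have E_lim: "(?E \<longlongrightarrow> 0) at_bot" by (simp add: energy_def[abs_def])
  obtain B where B: "\<And>a b. b \<le> -B \<or> B \<le> a \<Longrightarrow> integral {a..b} (\<lambda>x. norm (V x)) \<le> k / 2"
    using short_range_tail[OF V, of "k / 2"] k by auto
  have "?E t = 0" if "t \<le> -B" for t
  proof (rule energy_zero_on_interval[OF V k \<psi>, of "{..-B}"])
    show "bdd_above (?E ` {..-B})"
      by (rule bdd_above_image_atMost_of_tendsto_at_bot[OF continuous_on_energy[OF \<psi>] E_lim])
    fix x \<epsilon> :: real assume "x \<in> {..-B}" "\<epsilon> > 0"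
    then obtain N where "\<And>t. t \<le> N \<Longrightarrow> ?E t < \<epsilon>"
      using tendstoD[OF E_lim \<open>\<epsilon> > 0\<close>] by (auto simp: eventually_at_bot_linorder energy_nonneg)
    with \<open>x \<in> {..-B}\<close> show "\<exists>y\<in>{..-B}. y \<le> x \<and> ?E y < \<epsilon>"
      by (intro bexI[of _ "min N x"]) auto
  qed (use B that in auto)
  then show thesis by (rule that)
qed

lemma short_range_small_step:
  assumes "short_range V" and "e > 0"
  obtains h where "h > 0" and "integral {c..c+h} (\<lambda>t. norm (V t)) \<le> e"
proof -
  obtain d where "d > 0" and d: "\<forall>t. c \<le> t \<and> t < c + d \<longrightarrow>
      norm (integral {c..c} (\<lambda>t. norm (V t)) - integral {c..t} (\<lambda>t. norm (V t))) < e"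
    by (rule indefinite_integral_continuous_right[OF short_range_integrable[OF assms(1), of c "c+1"],
          where c=c and e=e])
      (use assms(2) in auto)
  have "\<bar>integral {c..c + d/2} (\<lambda>t. norm (V t))\<bar> < e"
    using d[rule_format, of "c + d/2"] \<open>d > 0\<close> by simp
  then have "integral {c..c + d/2} (\<lambda>t. norm (V t)) \<le> e" by linarith
  with \<open>d > 0\<close> show thesis by (intro that[of "d/2"]) auto
qed

lemma energy_zero_right_of_zero:
  assumes V: "short_range V" and k: "k > 0" and \<psi>: "schrod_pair V k \<psi> \<psi>'"
    and c: "energy k \<psi> \<psi>' c = 0" and "h > 0"
    and mass: "integral {c..c+h} (\<lambda>t. norm (V t)) \<le> k / 2" and t: "t \<in> {c..c+h}"
  shows "energy k \<psi> \<psi>' t = 0"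
proof (rule energy_zero_on_interval[OF V k \<psi> _ _ _ _ t])
  fix y x assume "y \<in> {c..c+h}" "x \<in> {c..c+h}"
  then show "{y..x} \<subseteq> {c..c+h}" by auto
  have "integral {y..x} (\<lambda>t. norm (V t)) \<le> integral {c..c+h} (\<lambda>t. norm (V t))"
    using \<open>y \<in> {c..c+h}\<close> \<open>x \<in> {c..c+h}\<close>
    by (intro integral_subset_le) (auto intro: short_range_integrable[OF V])
  with mass show "integral {y..x} (\<lambda>t. norm (V t)) \<le> k / 2" by linarith
next
  show "bdd_above (energy k \<psi> \<psi>' ` {c..c+h})"
    by (intro bounded_imp_bdd_above compact_imp_bounded compact_continuous_image compact_Icc
        continuous_on_energy[OF \<psi>])
next
  fix x \<epsilon> :: real assume "x \<in> {c..c+h}" "\<epsilon> > 0"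
  with c show "\<exists>y\<in>{c..c+h}. y \<le> x \<and> energy k \<psi> \<psi>' y < \<epsilon>"
    using \<open>h > 0\<close> by (intro bexI[of _ c]) auto
qed

lemma schrod_pair_tendsto_zero_at_bot_eq_0:
  assumes V: "short_range V" and k: "k > 0" and \<psi>: "schrod_pair V k \<psi> \<psi>'"
    and lim: "(\<psi> \<longlongrightarrow> 0) at_bot"
  shows "\<psi> x = 0"
proof -
  let ?E = "energy k \<psi> \<psi>'"
  obtain x0 where x0: "\<And>t. t \<le> x0 \<Longrightarrow> ?E t = 0"
    using energy_zero_near_at_bot[OF V k \<psi> lim] by blast
  have "?E t = 0" for t
  proof (rule ccontr)
    assume "?E t \<noteq> 0"
    define Z where "Z = {z. \<forall>s\<le>z. ?E s = 0}"
    have "x0 \<in> Z" using x0 by (auto simp: Z_def)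
    have "z \<le> t" if "z \<in> Z" for z
      using that \<open>?E t \<noteq> 0\<close> nle_le unfolding Z_def by blast
    then have "bdd_above Z" by (rule bdd_aboveI)
    define T where "T = Sup Z"
    have "?E s = 0" if "s < T" for s
    proof -
      from less_cSupD[of Z s] obtain z where "z \<in> Z" "s < z"
        using \<open>x0 \<in> Z\<close> \<open>s < T\<close> by (auto simp: T_def)
      then show ?thesis by (auto simp: Z_def)
    qed
    moreover have "closed {s. ?E s = 0}"
      by (intro closed_Collect_eq continuous_on_energy[OF \<psi>] continuous_on_const)
    ultimately have "closure {..<T} \<subseteq> {s. ?E s = 0}"
      by (intro closure_minimal) auto
    then have left: "?E s = 0" if "s \<le> T" for s using that by auto
    obtain h where "h > 0" and "integral {T..T+h} (\<lambda>t. norm (V t)) \<le> k / 2"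
      using short_range_small_step[OF V, of "k / 2"] k by auto
    then have right: "?E s = 0" if "s \<in> {T..T+h}" for s
      using energy_zero_right_of_zero[OF V k \<psi> left[of T]] that by auto
    have "?E s = 0" if "s \<le> T + h" for s
      using left[of s] right[of s] that by (cases "s \<le> T") auto
    then have "T + h \<in> Z" by (simp add: Z_def)
    then have "T + h \<le> T" unfolding T_def using \<open>bdd_above Z\<close> by (rule cSup_upper)
    with \<open>h > 0\<close> show False by simp
  qed
  then show ?thesis using energy_eq_0_imp[OF k] by blast
qed

lemma schrod_pair_tendsto_zero_eq_0:
  fixes F :: "real filter"
  assumes V: "short_range V" and k: "k > 0" and \<psi>: "schrod_pair V k \<psi> \<psi>'"
    and F: "F = at_top \<or> F = at_bot" and lim: "(\<psi> \<longlongrightarrow> 0) F"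
  shows "\<psi> x = 0"
  using F
proof
  assume "F = at_bot"
  with lim show ?thesis by (intro schrod_pair_tendsto_zero_at_bot_eq_0[OF V k \<psi>]) simp
next
  assume "F = at_top"
  with lim have "((\<lambda>x. \<psi> (-x)) \<longlongrightarrow> 0) at_bot" by (simp add: filterlim_at_top_mirror)
  then have "\<psi> (- (-x)) = 0"
    by (rule schrod_pair_tendsto_zero_at_bot_eq_0[OF short_range_reflect[OF V] k
          schrod_pair_reflect[OF \<psi>]])
  then show ?thesis by simp
qed

section \<open>Plane waves and Jost solutions\<close>

definition plane_wave :: "real \<Rightarrow> real \<Rightarrow> complex" where
  "plane_wave s x = exp (\<i> * complex_of_real s * complex_of_real x)"

lemma asymp_exp_iff_plane_wave: "asymp_exp \<phi> s F \<longleftrightarrow> ((\<lambda>x. \<phi> x - plane_wave s x) \<longlongrightarrow> 0) F"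
  by (simp add: asymp_exp_def plane_wave_def)

lemma plane_wave_eq_exp_real: "plane_wave s x = exp (\<i> * of_real (s * x))"
  by (simp add: plane_wave_def mult.assoc)

lemma norm_plane_wave [simp]: "norm (plane_wave s x) = 1"
  by (simp add: plane_wave_eq_exp_real)

lemma cnj_plane_wave: "cnj (plane_wave s x) = plane_wave (-s) x"
  by (simp add: plane_wave_def exp_cnj)

lemma plane_wave_add: "plane_wave s (x + y) = plane_wave s x * plane_wave s y"
  by (simp add: plane_wave_def exp_add[symmetric] algebra_simps)

lemma plane_wave_quarter_period:
  assumes "k \<noteq> 0"
  shows "plane_wave k (pi / (2 * k)) = \<i>"
proof -
  have "plane_wave k (pi / (2 * k)) = exp (\<i> * of_real (pi / 2))"
    using assms by (simp add: plane_wave_eq_exp_real)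
  also have "\<dots> = cis (pi / 2)" by (simp add: cis_conv_exp)
  also have "\<dots> = \<i>" by (simp add: complex_eq_iff)
  finally show ?thesis .
qed

lemma plane_wave_has_vector_derivative:
  "(plane_wave s has_vector_derivative (\<i> * of_real s * plane_wave s x)) (at x)"
proof -
  have "((\<lambda>z. exp (\<i> * complex_of_real s * z)) has_field_derivative
      (\<i> * of_real s * exp (\<i> * complex_of_real s * of_real x))) (at (of_real x))"
    by (auto intro!: derivative_eq_intros)
  from has_vector_derivative_real_field[OF this] show ?thesis
    unfolding plane_wave_def[abs_def] by simp
qed

lemma multiple_of_plane_wave_tendsto_zero:
  assumes "((\<lambda>x. a * plane_wave s x) \<longlongrightarrow> 0) at_top"
  shows "a = 0"
proof -
  have "((\<lambda>x::real. norm a) \<longlongrightarrow> 0) at_top"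
    using tendsto_norm[OF assms] by (simp add: norm_mult)
  then show ?thesis by (simp add: tendsto_const_iff[OF trivial_limit_at_top_linorder])
qed

text \<open>Shifting by a quarter period \<open>c = \<pi>/(2k)\<close> multiplies the two waves by \<open>\<i>\<close> and \<open>-\<i>\<close>,
  which separates them.\<close>

lemma plane_waves_tendsto_zero_imp:
  assumes k: "k > 0" and lim: "((\<lambda>x. \<alpha> * plane_wave k x + \<beta> * plane_wave (-k) x) \<longlongrightarrow> 0) at_top"
  shows "\<alpha> = 0 \<and> \<beta> = 0"
proof -
  define f where "f = (\<lambda>x. \<alpha> * plane_wave k x + \<beta> * plane_wave (-k) x)"
  define c where "c = pi / (2 * k)"
  have shift: "filterlim (\<lambda>x. x + c) at_top at_top"
    using filterlim_tendsto_add_at_top[OF tendsto_const[of c] filterlim_ident] by (simp add: add.commute)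
  have shifted: "((\<lambda>x. f (x + c)) \<longlongrightarrow> 0) at_top"
    using filterlim_compose[OF lim[folded f_def] shift] by simp
  have "plane_wave k c = \<i>" "plane_wave (-k) c = - \<i>"
    using plane_wave_quarter_period[of k] cnj_plane_wave[of k c] k by (simp_all add: c_def)
  then have f_shift: "f (x + c) = \<i> * \<alpha> * plane_wave k x - \<i> * \<beta> * plane_wave (-k) x" for x
    by (simp add: f_def plane_wave_add algebra_simps)
  have "((\<lambda>x. f x - \<i> * f (x + c)) \<longlongrightarrow> 0 - \<i> * 0) at_top"
    by (intro tendsto_intros shifted) (use lim f_def in simp)
  moreover have "f x - \<i> * f (x + c) = 2 * \<alpha> * plane_wave k x" for x
    unfolding f_shift by (simp add: f_def algebra_simps)
  ultimately have "2 * \<alpha> = 0" by (intro multiple_of_plane_wave_tendsto_zero[of _ k]) simp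
  have "((\<lambda>x. f x + \<i> * f (x + c)) \<longlongrightarrow> 0 + \<i> * 0) at_top"
    by (intro tendsto_intros shifted) (use lim f_def in simp)
  moreover have "f x + \<i> * f (x + c) = 2 * \<beta> * plane_wave (-k) x" for x
    unfolding f_shift by (simp add: f_def algebra_simps)
  ultimately have "2 * \<beta> = 0" by (intro multiple_of_plane_wave_tendsto_zero[of _ "-k"]) simp
  with \<open>2 * \<alpha> = 0\<close> show ?thesis by simp
qed

lemma asymp_plane_waves_independent:
  assumes k: "k > 0" and comb: "\<And>x. \<alpha> * \<phi>\<^sub>1 x + \<beta> * \<phi>\<^sub>2 x = 0"
    and lim\<^sub>1: "((\<lambda>x. \<phi>\<^sub>1 x - plane_wave k x) \<longlongrightarrow> 0) at_top"
    and lim\<^sub>2: "((\<lambda>x. \<phi>\<^sub>2 x - plane_wave (-k) x) \<longlongrightarrow> 0) at_top"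
  shows "\<alpha> = 0 \<and> \<beta> = 0"
proof (rule plane_waves_tendsto_zero_imp[OF k])
  have "((\<lambda>x. (\<alpha> * \<phi>\<^sub>1 x + \<beta> * \<phi>\<^sub>2 x) - \<alpha> * (\<phi>\<^sub>1 x - plane_wave k x) - \<beta> * (\<phi>\<^sub>2 x - plane_wave (-k) x))
      \<longlongrightarrow> 0 - \<alpha> * 0 - \<beta> * 0) at_top"
    by (intro tendsto_intros lim\<^sub>1 lim\<^sub>2) (simp add: comb)
  then show "((\<lambda>x. \<alpha> * plane_wave k x + \<beta> * plane_wave (-k) x) \<longlongrightarrow> 0) at_top"
    by (simp add: algebra_simps)
qed

lemma jost_derivative_asymp:
  fixes F :: "real filter"
  assumes V: "short_range V" and F: "F = at_top \<or> F = at_bot" and \<psi>: "schrod_pair V k \<psi> \<psi>'"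
    and s: "s\<^sup>2 = k\<^sup>2" and lim: "((\<lambda>x. \<psi> x - plane_wave s x) \<longlongrightarrow> 0) F"
  shows "((\<lambda>x. \<psi>' x - \<i> * of_real s * plane_wave s x) \<longlongrightarrow> 0) F"
proof (rule tendsto_zero_derivative_of_equation[OF V F _ _ _ _ lim,
      where p = \<psi> and P = 2 and k = k and
        u'' = "\<lambda>t. (V t - (of_real k)\<^sup>2) * \<psi> t - \<i> * of_real s * (\<i> * of_real s * plane_wave s t)"])
  fix t
  show "((\<lambda>x. \<psi> x - plane_wave s x) has_vector_derivative \<psi>' t - \<i> * of_real s * plane_wave s t) (at t)"
    using \<psi> plane_wave_has_vector_derivative by (auto simp: schrod_pair_def intro!: derivative_intros)
  show "((\<lambda>x. \<psi>' x - \<i> * of_real s * plane_wave s x) has_vector_derivative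
      (V t - (of_real k)\<^sup>2) * \<psi> t - \<i> * of_real s * (\<i> * of_real s * plane_wave s t)) (at t)"
    using \<psi> plane_wave_has_vector_derivative by (auto simp: schrod_pair_def intro!: derivative_intros)
  have "(of_real s :: complex)\<^sup>2 = (of_real k)\<^sup>2" using s by (metis of_real_power)
  then show "(V t - (of_real k)\<^sup>2) * \<psi> t - \<i> * of_real s * (\<i> * of_real s * plane_wave s t)
      = V t * \<psi> t - (of_real k)\<^sup>2 * (\<psi> t - plane_wave s t)"
    by (simp add: algebra_simps power2_eq_square)
next
  have "eventually (\<lambda>t. dist (\<psi> t - plane_wave s t) 0 < 1) F"
    using tendstoD[OF lim, of 1] by simp
  then show "eventually (\<lambda>t. norm (\<psi> t) \<le> 2) F"
  proof (rule eventually_mono)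
    fix t assume "dist (\<psi> t - plane_wave s t) 0 < 1"
    then show "norm (\<psi> t) \<le> 2"
      using norm_triangle_sub[of "\<psi> t" "plane_wave s t"] by simp
  qed
qed

lemma schrod_pair_eq_of_asymp:
  fixes F :: "real filter"
  assumes V: "short_range V" and k: "k > 0" and F: "F = at_top \<or> F = at_bot"
    and f: "schrod_pair V k f f'" and g: "schrod_pair V k g g'"
    and lim_f: "((\<lambda>x. f x - a * plane_wave s x) \<longlongrightarrow> 0) F"
    and lim_g: "((\<lambda>x. g x - plane_wave s x) \<longlongrightarrow> 0) F"
  shows "f x = a * g x"
proof -
  have "((\<lambda>x. (f x - a * plane_wave s x) - a * (g x - plane_wave s x)) \<longlongrightarrow> 0 - a * 0) F"
    by (intro tendsto_intros lim_f lim_g)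
  then have "((\<lambda>x. 1 * f x + (-a) * g x) \<longlongrightarrow> 0) F" by (simp add: algebra_simps)
  from schrod_pair_tendsto_zero_eq_0[OF V k schrod_pair_lincomb[OF f g] F this]
  show ?thesis by simp
qed

section \<open>The Darboux transformation\<close>

definition darboux ::
  "(real \<Rightarrow> real) \<Rightarrow> (real \<Rightarrow> complex) \<Rightarrow> (real \<Rightarrow> complex) \<Rightarrow> real \<Rightarrow> complex" where
  "darboux w \<psi> \<psi>' x = cnj (\<psi>' x + \<i> * of_real (w x) * \<psi> x)"

text \<open>For \<open>\<eta> = \<psi>' + i w \<psi>\<close> one finds \<open>\<eta>' = i w \<eta> + (k0\<^sup>2 - k\<^sup>2) \<psi>\<close> and
  \<open>\<eta>'' = (cnj V - k\<^sup>2) \<eta>\<close>; conjugating gives the equation for \<open>V\<close> again.\<close>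

lemma schrod_pair_darboux:
  assumes w: "\<And>x. (w has_real_derivative w' x) (at x)" and \<psi>: "schrod_pair (pot w w' k0) k \<psi> \<psi>'"
  obtains \<chi>' where "schrod_pair (pot w w' k0) k (darboux w \<psi> \<psi>') \<chi>'"
proof -
  have d1: "(\<psi> has_vector_derivative \<psi>' x) (at x)"
    and d2: "(\<psi>' has_vector_derivative ((pot w w' k0 x - (of_real k)\<^sup>2) * \<psi> x)) (at x)"
    for x using \<psi> by (auto simp: schrod_pair_def)
  define \<eta> where "\<eta> = (\<lambda>x. \<psi>' x + \<i> * of_real (w x) * \<psi> x)"
  define \<eta>' where "\<eta>' = (\<lambda>x. \<i> * of_real (w x) * \<eta> x + ((of_real k0)\<^sup>2 - (of_real k)\<^sup>2) * \<psi> x)"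
  have "(\<eta> has_vector_derivative (pot w w' k0 x - (of_real k)\<^sup>2) * \<psi> x +
      \<i> * (of_real (w x) * \<psi>' x + of_real (w' x) * \<psi> x)) (at x)" for x
    unfolding \<eta>_def using d1 d2 w by (auto intro!: derivative_eq_intros simp: algebra_simps)
  moreover have "(pot w w' k0 x - (of_real k)\<^sup>2) * \<psi> x + \<i> * (of_real (w x) * \<psi>' x + of_real (w' x) * \<psi> x)
      = \<eta>' x" for x
    unfolding \<eta>'_def \<eta>_def pot_def by (simp add: algebra_simps power2_eq_square)
  ultimately have d\<eta>: "(\<eta> has_vector_derivative \<eta>' x) (at x)" for x by simp
  have "(\<eta>' has_vector_derivative \<i> * (of_real (w x) * \<eta>' x + of_real (w' x) * \<eta> x) +
      ((of_real k0)\<^sup>2 - (of_real k)\<^sup>2) * \<psi>' x) (at x)" for x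
    using d1 d\<eta> w
    by (auto simp: \<eta>'_def intro!: derivative_eq_intros simp: algebra_simps)
  moreover have "\<i> * (of_real (w x) * \<eta>' x + of_real (w' x) * \<eta> x) +
      ((of_real k0)\<^sup>2 - (of_real k)\<^sup>2) * \<psi>' x = cnj ((pot w w' k0 x - (of_real k)\<^sup>2) * cnj (\<eta> x))" for x
    unfolding \<eta>'_def \<eta>_def pot_def by (simp add: algebra_simps power2_eq_square)
  ultimately have d\<eta>': "(\<eta>' has_vector_derivative cnj ((pot w w' k0 x - (of_real k)\<^sup>2) * cnj (\<eta> x))) (at x)"
    for x by simp
  have "darboux w \<psi> \<psi>' = (\<lambda>x. cnj (\<eta> x))" by (simp add: fun_eq_iff darboux_def \<eta>_def)
  then have "schrod_pair (pot w w' k0) k (darboux w \<psi> \<psi>') (\<lambda>x. cnj (\<eta>' x))"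
    using has_vector_derivative_cnj[OF d\<eta>] has_vector_derivative_cnj[OF d\<eta>'] by (simp add: schrod_pair_def)
  then show thesis by (rule that)
qed

lemma darboux_asymp:
  assumes lim: "((\<lambda>x. \<psi> x - plane_wave s x) \<longlongrightarrow> 0) F"
    and lim': "((\<lambda>x. \<psi>' x - \<i> * of_real s * plane_wave s x) \<longlongrightarrow> 0) F"
    and w: "(w \<longlongrightarrow> c) F"
  shows "((\<lambda>x. darboux w \<psi> \<psi>' x - (- \<i> * of_real (s + c)) * plane_wave (-s) x) \<longlongrightarrow> 0) F"
proof -
  have "((\<lambda>x. \<i> * of_real (w x - c) * plane_wave s x) \<longlongrightarrow> 0) F"
  proof -
    have "((\<lambda>x. \<bar>w x - c\<bar>) \<longlongrightarrow> \<bar>c - c\<bar>) F" by (intro tendsto_intros w)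
    then show ?thesis
      by (subst tendsto_norm_zero_iff[symmetric]) (simp add: norm_mult del: of_real_diff)
  qed
  then have "((\<lambda>x. cnj ((\<psi>' x - \<i> * of_real s * plane_wave s x) + \<i> * of_real (w x) * (\<psi> x - plane_wave s x)
      + \<i> * of_real (w x - c) * plane_wave s x)) \<longlongrightarrow> cnj (0 + \<i> * of_real c * 0 + 0)) F"
    by (intro tendsto_intros lim lim' w)
  moreover have "cnj ((\<psi>' x - \<i> * of_real s * plane_wave s x) + \<i> * of_real (w x) * (\<psi> x - plane_wave s x)
      + \<i> * of_real (w x - c) * plane_wave s x)
      = darboux w \<psi> \<psi>' x - (- \<i> * of_real (s + c)) * plane_wave (-s) x" for x
    by (simp add: darboux_def cnj_plane_wave[symmetric] algebra_simps)
  ultimately show ?thesis by simp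
qed

lemma darboux_jost:
  fixes F :: "real filter"
  assumes V: "short_range (pot w w' k0)" and w': "\<And>x. (w has_real_derivative w' x) (at x)"
    and F: "F = at_top \<or> F = at_bot" and k: "k > 0" and s: "s\<^sup>2 = k\<^sup>2"
    and \<psi>: "schrod_pair (pot w w' k0) k \<psi> \<psi>'" and \<phi>: "schrod_pair (pot w w' k0) k \<phi> \<phi>'"
    and lim_\<psi>: "((\<lambda>x. \<psi> x - plane_wave s x) \<longlongrightarrow> 0) F"
    and lim_\<phi>: "((\<lambda>x. \<phi> x - plane_wave (-s) x) \<longlongrightarrow> 0) F"
    and w: "(w \<longlongrightarrow> c) F"
  shows "darboux w \<psi> \<psi>' x = - \<i> * of_real (s + c) * \<phi> x"
proof -
  obtain \<chi>' where "schrod_pair (pot w w' k0) k (darboux w \<psi> \<psi>') \<chi>'"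
    using schrod_pair_darboux[OF w' \<psi>] by blast
  moreover have "((\<lambda>x. darboux w \<psi> \<psi>' x - (- \<i> * of_real (s + c)) * plane_wave (-s) x) \<longlongrightarrow> 0) F"
    by (rule darboux_asymp[OF lim_\<psi> jost_derivative_asymp[OF V F \<psi> s lim_\<psi>] w])
  ultimately show ?thesis by (rule schrod_pair_eq_of_asymp[OF V k F _ \<phi> _ lim_\<phi>])
qed

section \<open>The transfer matrix\<close>

lemma transfer_matrix_conj_relation:
  fixes w w' :: "real \<Rightarrow> real" and M11 M12 M21 M22 :: "real \<Rightarrow> complex"
  assumes k: "k > 0" and w': "\<And>x. (w has_real_derivative w' x) (at x)"
    and lim_top: "(w \<longlongrightarrow> - k0) at_top" and lim_bot: "(w \<longlongrightarrow> k0) at_bot"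
    and V: "short_range (pot w w' k0)" and M: "is_transfer_matrix (pot w w' k0) M11 M12 M21 M22"
  shows "M11 k * of_real (k - k0) = of_real (k + k0) * cnj (M22 k)"
proof -
  let ?V = "pot w w' k0"
  obtain \<phi>1L \<phi>2L \<phi>1R \<phi>2R where
    sol: "schrod_sol ?V k \<phi>1L" "schrod_sol ?V k \<phi>2L" "schrod_sol ?V k \<phi>1R" "schrod_sol ?V k \<phi>2R"
    and a1L: "((\<lambda>x. \<phi>1L x - plane_wave k x) \<longlongrightarrow> 0) at_bot"
    and a2L: "((\<lambda>x. \<phi>2L x - plane_wave (-k) x) \<longlongrightarrow> 0) at_bot"
    and a1R: "((\<lambda>x. \<phi>1R x - plane_wave k x) \<longlongrightarrow> 0) at_top"
    and a2R: "((\<lambda>x. \<phi>2R x - plane_wave (-k) x) \<longlongrightarrow> 0) at_top"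
    and r1: "\<And>x. \<phi>1L x = M11 k * \<phi>1R x + M21 k * \<phi>2R x"
    and r2: "\<And>x. \<phi>2L x = M12 k * \<phi>1R x + M22 k * \<phi>2R x"
    using M k unfolding is_transfer_matrix_def asymp_exp_iff_plane_wave by blast
  obtain p1L p2L p1R p2R where
    p1L: "schrod_pair ?V k \<phi>1L p1L" and p2L: "schrod_pair ?V k \<phi>2L p2L"
    and p1R: "schrod_pair ?V k \<phi>1R p1R" and p2R: "schrod_pair ?V k \<phi>2R p2R"
    by (metis sol schrod_sol_imp_schrod_pair)
  have F: "at_bot = at_top \<or> at_bot = (at_bot :: real filter)" "at_top = at_top \<or> at_top = (at_bot :: real filter)"
    and s: "k\<^sup>2 = k\<^sup>2" "(-k)\<^sup>2 = k\<^sup>2" by simp_all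
  have "\<phi>1L = (\<lambda>x. M11 k * \<phi>1R x + M21 k * \<phi>2R x)" using r1 by auto
  then have "p1L x = M11 k * p1R x + M21 k * p2R x" for x
    using schrod_pair_derivative_unique[OF p1L] schrod_pair_lincomb[OF p1R p2R] by metis
  then have "darboux w \<phi>1L p1L x = cnj (M11 k) * darboux w \<phi>1R p1R x + cnj (M21 k) * darboux w \<phi>2R p2R x" for x
    by (simp add: darboux_def r1 algebra_simps)
  moreover have "darboux w \<phi>1L p1L x = - \<i> * of_real (k + k0) * \<phi>2L x" for x
    by (rule darboux_jost[OF V w' F(1) k s(1) p1L p2L a1L a2L lim_bot])
  moreover have "darboux w \<phi>1R p1R x = - \<i> * of_real (k + - k0) * \<phi>2R x" for x
    by (rule darboux_jost[OF V w' F(2) k s(1) p1R p2R a1R a2R lim_top])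
  moreover have "darboux w \<phi>2R p2R x = - \<i> * of_real (- k + - k0) * \<phi>1R x" for x
    using darboux_jost[OF V w' F(2) k s(2) p2R p1R a2R _ lim_top] a1R by simp
  ultimately have "(- \<i> * of_real (k + k0) * M12 k - \<i> * of_real (k + k0) * cnj (M21 k)) * \<phi>1R x
      + (- \<i> * of_real (k + k0) * M22 k + \<i> * of_real (k - k0) * cnj (M11 k)) * \<phi>2R x = 0" for x
    by (simp add: r2 algebra_simps)
  from asymp_plane_waves_independent[OF k this a1R a2R]
  have "\<i> * (of_real (k + k0) * M22 k) = \<i> * (of_real (k - k0) * cnj (M11 k))"
    by (simp add: algebra_simps)
  then have "cnj (of_real (k + k0) * M22 k) = cnj (of_real (k - k0) * cnj (M11 k))" by simp
  then show ?thesis by (simp add: mult.commute)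
qed

theorem mainTheorem6:
  fixes w w' :: "real \<Rightarrow> real" and k0 :: real
    and M11 M12 M21 M22 :: "real \<Rightarrow> complex" and D :: complex
  assumes k0: "k0 > 0"
    and wder: "\<forall>x. (w has_real_derivative w' x) (at x)"
    and lim_top: "(w \<longlongrightarrow> - k0) at_top"
    and lim_bot: "(w \<longlongrightarrow> k0) at_bot"
    and short_range: "pot w w' k0 absolutely_integrable_on UNIV"
    and M: "is_transfer_matrix (pot w w' k0) M11 M12 M21 M22"
    and M11_diff: "M11 differentiable (at k0)"
    and M22_der: "(M22 has_vector_derivative D) (at k0)"
  shows "M22 k0 = 0 \<and> M11 k0 = 2 * complex_of_real k0 * cnj D \<and> (M11 k0 = 0 \<longleftrightarrow> D = 0)"
proof -
  have rel: "M11 k * of_real (k - k0) = of_real (k + k0) * cnj (M22 k)" if "k > 0" for k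
    using transfer_matrix_conj_relation[OF that wder[rule_format] lim_top lim_bot
        absolutely_integrable_short_range[OF short_range] M] .
  have "of_real (k0 + k0) * cnj (M22 k0) = 0" using rel[OF k0] by simp
  then have M22: "M22 k0 = 0" using k0 by simp
  obtain M11' where "(M11 has_vector_derivative M11') (at k0)"
    using M11_diff vector_derivative_works by blast
  then have "((\<lambda>k. M11 k * of_real (k - k0)) has_vector_derivative M11 k0) (at k0)"
    by (auto intro!: derivative_eq_intros)
  then have "((\<lambda>k. of_real (k + k0) * cnj (M22 k)) has_vector_derivative M11 k0) (at k0)"
    by (rule has_vector_derivative_transform_within_open[of _ _ _ "{0<..}"]) (use k0 rel in auto)
  moreover have "((\<lambda>k. of_real (k + k0) * cnj (M22 k)) has_vector_derivative
      of_real (k0 + k0) * cnj D + cnj (M22 k0)) (at k0)"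
    using M22_der by (auto intro!: derivative_eq_intros has_vector_derivative_cnj)
  ultimately have "M11 k0 = 2 * complex_of_real k0 * cnj D"
    using vector_derivative_unique_at M22 by fastforce
  with M22 k0 show ?thesis by simp
qed

end
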